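(* For a non-negative integer $n$ and real numbers $p,x$, define \[ G_n(p,x)=\sum_{i=0}^n\binom{n}{i}\big((1-x)p+ix/n\big)^i\big(1-(1-x)p-ix/n\big)^{n-i}. \] Then for all non-negative integers $n$ (and all real $p,x$), \[ G_n(p,x)=\sum_{i=0}^n\frac{n!}{n^i(n-i)!}\,x^i. \]
   Context: Conventions: $0^0=1$; when $i=n=0$, the quantity $ix/n$ is interpreted with $0/0=1$ (so $G_0(p,x)=1$). *)

theory Defs
  imports Complex_Main
begin

definition G :: "nat \<Rightarrow> real \<Rightarrow> real \<Rightarrow> real" where
  "G n p x = (\<Sum>i=0..n. real (n choose i)
      * ((1 - x) * p + real i * x / real n) ^ i
      * (1 - (1 - x) * p - real i * x / real n) ^ (n - i))"

end

theory Submission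
  imports Defs
begin

text \<open>
  Write \<open>b\<^sub>k = a + k z\<close>. Expanding \<open>(s - b\<^sub>k)\<^bsup>n-k\<^esup>\<close> binomially and collecting the
  terms with total exponent \<open>m\<close> of \<open>b\<^sub>k\<close> turns
  \<open>\<Sum>\<^sub>k C(n,k) b\<^sub>k\<^bsup>k\<^esup> (s - b\<^sub>k)\<^bsup>n-k\<^esup>\<close> into
  \<open>\<Sum>\<^sub>m C(n,m) s\<^bsup>n-m\<^esup> \<Delta>\<^sup>m[k \<mapsto> b\<^sub>k\<^sup>m](0)\<close>, where \<open>\<Delta>\<^sup>m\<close> is the \<open>m\<close>-th forward difference.
  The \<open>m\<close>-th difference of a polynomial of degree \<open>m\<close> in \<open>k\<close> is \<open>m!\<close> times its leading
  coefficient, here \<open>m! z\<^sup>m\<close>, independently of \<open>a\<close>. With \<open>a = (1 - x) p\<close>, \<open>z = x / n\<close>,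
  \<open>s = 1\<close> this gives the theorem; for \<open>n = 0\<close> the convention \<open>x / 0 = 0\<close> is harmless.
\<close>

lemma alternating_sum_choose_power:
  assumes "i \<le> m"
  shows "(\<Sum>k\<le>m. (-1) ^ (m - k) * of_nat (m choose k) * of_nat k ^ i :: 'a::comm_ring_1)
       = (if i = m then of_nat (fact m) else 0)"
  using assms
proof (induction m arbitrary: i)
  case 0
  then show ?case by simp
next
  case (Suc n)
  show ?case
  proof (cases i)
    case 0
    have "(\<Sum>k\<le>Suc n. (-1) ^ (Suc n - k) * of_nat (Suc n choose k) :: 'a) = 0"
      using binomial_ring[of 1 "-1 :: 'a" "Suc n"] by (simp add: mult.commute)
    then show ?thesis using 0 by simp
  next
    case (Suc j)
    with Suc.prems have "j \<le> n" by simp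
    have absorb: "of_nat (Suc n choose Suc k) * of_nat (Suc k) = (of_nat (Suc n) * of_nat (n choose k) :: 'a)"
      for k
      by (metis Suc_times_binomial mult.commute of_nat_mult)
    have "(\<Sum>k\<le>Suc n. (-1) ^ (Suc n - k) * of_nat (Suc n choose k) * of_nat k ^ i :: 'a)
        = (\<Sum>k\<le>n. (-1) ^ (n - k) * (of_nat (Suc n choose Suc k) * of_nat (Suc k)) * of_nat (Suc k) ^ j)"
      unfolding Suc by (subst sum.atMost_Suc_shift) (simp add: mult_ac del: of_nat_Suc binomial_Suc_Suc)
    also have "\<dots> = of_nat (Suc n) * (\<Sum>k\<le>n. (-1) ^ (n - k) * of_nat (n choose k) * (of_nat k + 1) ^ j)"
      by (simp only: absorb) (simp add: sum_distrib_left mult_ac add.commute)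
    also have "\<dots> = of_nat (Suc n) * (\<Sum>l\<le>j. of_nat (j choose l)
                       * (\<Sum>k\<le>n. (-1) ^ (n - k) * of_nat (n choose k) * of_nat k ^ l))"
      by (simp add: binomial_ring sum_distrib_left sum.swap[of _ "{..n}"] mult_ac)
    also have "\<dots> = of_nat (Suc n) * (\<Sum>l\<le>j. of_nat (j choose l) * (if l = n then of_nat (fact n) else 0))"
      using Suc.IH \<open>j \<le> n\<close> by (intro arg_cong2[where f = "(*)"] refl sum.cong) auto
    also have "\<dots> = (if i = Suc n then of_nat (fact (Suc n)) else 0)"
      using \<open>j \<le> n\<close> Suc by (auto simp: if_distrib[of "\<lambda>v. _ * v"] sum.delta distrib_right cong: if_cong)
    finally show ?thesis .
  qed
qed

lemma alternating_sum_choose_affine_power: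
  "(\<Sum>k\<le>m. (-1) ^ (m - k) * of_nat (m choose k) * (a + of_nat k * z) ^ m :: 'a::comm_ring_1)
     = of_nat (fact m) * z ^ m"
proof -
  have expand: "(a + of_nat k * z) ^ m = (\<Sum>i\<le>m. of_nat (m choose i) * z ^ i * a ^ (m - i) * of_nat k ^ i)"
    for k
    using binomial_ring[of "of_nat k * z" a m] by (simp add: add.commute mult_ac power_mult_distrib)
  have "(\<Sum>k\<le>m. (-1) ^ (m - k) * of_nat (m choose k) * (a + of_nat k * z) ^ m :: 'a)
      = (\<Sum>i\<le>m. of_nat (m choose i) * z ^ i * a ^ (m - i)
           * (\<Sum>k\<le>m. (-1) ^ (m - k) * of_nat (m choose k) * of_nat k ^ i))"
    unfolding expand sum_distrib_left by (subst sum.swap) (simp add: mult_ac)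
  also have "\<dots> = (\<Sum>i\<le>m. of_nat (m choose i) * z ^ i * a ^ (m - i) * (if i = m then of_nat (fact m) else 0))"
    by (intro sum.cong refl) (simp add: alternating_sum_choose_power)
  also have "\<dots> = of_nat (fact m) * z ^ m"
    by (simp add: if_distrib[of "\<lambda>v. _ * v"] sum.delta cong: if_cong)
  finally show ?thesis .
qed

lemma sum_triangle_shift:
  fixes g :: "nat \<Rightarrow> nat \<Rightarrow> 'a::comm_monoid_add"
  shows "(\<Sum>k\<le>n. \<Sum>l\<le>n - k. g k (k + l)) = (\<Sum>m\<le>n. \<Sum>k\<le>m. g k m)"
proof -
  have "(\<Sum>k\<le>n. \<Sum>l\<le>n - k. g k (k + l)) = (\<Sum>(k, l)\<in>Sigma {..n} (\<lambda>k. {..n - k}). g k (k + l))"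
    by (simp add: sum.Sigma)
  also have "Sigma {..n} (\<lambda>k. {..n - k}) = {(k, l). k + l \<le> n}"
    by auto
  also have "(\<Sum>(k, l)\<in>\<dots>. g k (k + l)) = (\<Sum>m\<le>n. \<Sum>k\<le>m. g k (k + (m - k)))"
    by (rule sum.triangle_reindex_eq)
  also have "\<dots> = (\<Sum>m\<le>n. \<Sum>k\<le>m. g k m)"
    by simp
  finally show ?thesis .
qed

lemma sum_choose_shifted_powers:
  fixes a z s :: "'a::comm_ring_1"
  shows "(\<Sum>k\<le>n. of_nat (n choose k) * (a + of_nat k * z) ^ k * (s - a - of_nat k * z) ^ (n - k))
       = (\<Sum>m\<le>n. of_nat (n choose m) * of_nat (fact m) * z ^ m * s ^ (n - m))"
proof -
  define b where "b k = a + of_nat k * z" for k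
  define g where "g k m = of_nat (n choose k) * of_nat ((n - k) choose (m - k)) * (-1) ^ (m - k) * b k ^ m * s ^ (n - m)"
    for k m
  have "of_nat (n choose k) * b k ^ k * (s - b k) ^ (n - k) = (\<Sum>l\<le>n - k. g k (k + l))" for k
  proof -
    have "(s - b k) ^ (n - k) = (\<Sum>l\<le>n - k. of_nat ((n - k) choose l) * (- b k) ^ l * s ^ (n - k - l))"
      using binomial_ring[of "- b k" s "n - k"] by simp
    then show ?thesis
      by (simp add: g_def sum_distrib_left power_minus[of "b k"] power_add mult_ac)
  qed
  then have "(\<Sum>k\<le>n. of_nat (n choose k) * (a + of_nat k * z) ^ k * (s - a - of_nat k * z) ^ (n - k))
      = (\<Sum>k\<le>n. \<Sum>l\<le>n - k. g k (k + l))"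
    by (simp add: b_def diff_diff_eq)
  also have "\<dots> = (\<Sum>m\<le>n. \<Sum>k\<le>m. g k m)"
    by (rule sum_triangle_shift)
  also have "\<dots> = (\<Sum>m\<le>n. of_nat (n choose m) * s ^ (n - m)
                   * (\<Sum>k\<le>m. (-1) ^ (m - k) * of_nat (m choose k) * b k ^ m))"
  proof (intro sum.cong refl)
    fix m assume "m \<in> {..n}"
    then have "of_nat (n choose k) * of_nat ((n - k) choose (m - k)) = (of_nat (n choose m) * of_nat (m choose k) :: 'a)"
      if "k \<le> m" for k
      using choose_mult[OF that] by (metis atMost_iff of_nat_mult)
    then show "(\<Sum>k\<le>m. g k m) = of_nat (n choose m) * s ^ (n - m)
                 * (\<Sum>k\<le>m. (-1) ^ (m - k) * of_nat (m choose k) * b k ^ m)"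
      unfolding sum_distrib_left by (intro sum.cong refl) (simp add: g_def mult_ac)
  qed
  also have "\<dots> = (\<Sum>m\<le>n. of_nat (n choose m) * of_nat (fact m) * z ^ m * s ^ (n - m))"
    unfolding b_def alternating_sum_choose_affine_power by (simp add: mult_ac)
  finally show ?thesis .
qed

theorem lemma2p8:
  fixes n :: nat and p x :: real
  shows "G n p x = (\<Sum>i=0..n. fact n / (real n ^ i * fact (n - i)) * x ^ i)"
proof -
  have "G n p x = (\<Sum>k\<le>n. real (n choose k) * ((1 - x) * p + real k * (x / real n)) ^ k
                     * (1 - (1 - x) * p - real k * (x / real n)) ^ (n - k))"
    unfolding G_def atLeast0AtMost by simp
  also have "\<dots> = (\<Sum>m\<le>n. real (n choose m) * fact m * (x / real n) ^ m)"
    using sum_choose_shifted_powers[of n "(1 - x) * p" "x / real n" 1] by simp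
  also have "\<dots> = (\<Sum>i=0..n. fact n / (real n ^ i * fact (n - i)) * x ^ i)"
    unfolding atLeast0AtMost
    by (intro sum.cong refl) (simp add: binomial_fact power_divide)
  finally show ?thesis .
qed

end
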